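(* Let $E$ be a directed graph such that each cycle is either without exits or extreme, and such that each infinite emitter lies on a cycle. If $H\subseteq E^0$ is hereditary and saturated, then no vertex of $R(H)-H$ lies on a cycle and each vertex of $R(H)-H$ is regular. Consequently, if $(H,S)$ is an admissible pair of $E$, then $B_H=S=\emptyset$.
   Context: A path is a vertex or finite sequence of edges $e_1\dots e_n$ with $\mathbf{r}(e_i)=\mathbf{s}(e_{i+1})$; $p^0$ is its vertex set. A cycle is a closed path of positive length whose edges have distinct sources; an exit of a cycle $c$ is an edge with source in $c^0$ not on $c$. A cycle $c$ is extreme if it has exits and for every path $p$ with $\mathbf{s}(p)\in c^0$ there is a path $q$ with $\mathbf{s}(q)=\mathbf{r}(p)$ and $\mathbf{r}(q)\in c^0$. An infinite emitter emits infinitely many edges; a sink emits none; a vertex is regular if it is neither. $u\ge v$ means there is a path (possibly of length 0) from $u$ to $v$; $R(V)=\{u\mid u\ge v$ for some $v\in V\}$. $H$ hereditary: closed under following paths; saturated: every regular $v$ with $\mathbf{r}(\mathbf{s}^{-1}(v))\subseteq H$ is in $H$. $B_H=\{v\in E^0-H\mid v$ is an infinite emitter and $\mathbf{s}^{-1}(v)\cap\mathbf{r}^{-1}(E^0-H)$ is nonempty and finite$\}$. An admissible pair is $(H,S)$ with $H$ hereditary saturated and $S\subseteq B_H$. *)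

theory Defs
  imports Main
begin

text \<open>A directed graph E is given by its source and range maps
  src, rng :: 'e \<Rightarrow> 'v; E^0 = UNIV :: 'v set, E^1 = UNIV :: 'e set.
  A path of positive length is a nonempty list of edges.\<close>

definition is_epath :: "('e \<Rightarrow> 'v) \<Rightarrow> ('e \<Rightarrow> 'v) \<Rightarrow> 'e list \<Rightarrow> bool" where
  "is_epath src rng p \<longleftrightarrow> p \<noteq> [] \<and>
     (\<forall>i. Suc i < length p \<longrightarrow> rng (p ! i) = src (p ! Suc i))"

definition path_verts :: "('e \<Rightarrow> 'v) \<Rightarrow> ('e \<Rightarrow> 'v) \<Rightarrow> 'e list \<Rightarrow> 'v set" where
  "path_verts src rng p = src ` set p \<union> rng ` set p"

text \<open>u \<ge> v: a path (possibly of length 0, i.e. u = v) from u to v.\<close>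
definition reaches :: "('e \<Rightarrow> 'v) \<Rightarrow> ('e \<Rightarrow> 'v) \<Rightarrow> 'v \<Rightarrow> 'v \<Rightarrow> bool" where
  "reaches src rng u v \<longleftrightarrow> u = v \<or>
     (\<exists>p. is_epath src rng p \<and> src (hd p) = u \<and> rng (last p) = v)"

definition is_cycle :: "('e \<Rightarrow> 'v) \<Rightarrow> ('e \<Rightarrow> 'v) \<Rightarrow> 'e list \<Rightarrow> bool" where
  "is_cycle src rng c \<longleftrightarrow> is_epath src rng c \<and> rng (last c) = src (hd c)
     \<and> distinct (map src c)"

definition is_exit :: "('e \<Rightarrow> 'v) \<Rightarrow> ('e \<Rightarrow> 'v) \<Rightarrow> 'e list \<Rightarrow> 'e \<Rightarrow> bool" where
  "is_exit src rng c e \<longleftrightarrow> src e \<in> path_verts src rng c \<and> e \<notin> set c"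

definition has_exits :: "('e \<Rightarrow> 'v) \<Rightarrow> ('e \<Rightarrow> 'v) \<Rightarrow> 'e list \<Rightarrow> bool" where
  "has_exits src rng c \<longleftrightarrow> (\<exists>e. is_exit src rng c e)"

text \<open>Extreme: has exits, and for every path p (a vertex or a path of positive length)
  with source in c^0 there is a path q from r(p) back into c^0.\<close>
definition extreme_cycle :: "('e \<Rightarrow> 'v) \<Rightarrow> ('e \<Rightarrow> 'v) \<Rightarrow> 'e list \<Rightarrow> bool" where
  "extreme_cycle src rng c \<longleftrightarrow> is_cycle src rng c \<and> has_exits src rng c \<and>
     (\<forall>v \<in> path_verts src rng c. \<exists>w \<in> path_verts src rng c. reaches src rng v w) \<and>
     (\<forall>p. is_epath src rng p \<and> src (hd p) \<in> path_verts src rng c \<longrightarrow>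
        (\<exists>w \<in> path_verts src rng c. reaches src rng (rng (last p)) w))"

definition on_cycle :: "('e \<Rightarrow> 'v) \<Rightarrow> ('e \<Rightarrow> 'v) \<Rightarrow> 'v \<Rightarrow> bool" where
  "on_cycle src rng v \<longleftrightarrow> (\<exists>c. is_cycle src rng c \<and> v \<in> path_verts src rng c)"

definition infinite_emitter :: "('e \<Rightarrow> 'v) \<Rightarrow> 'v \<Rightarrow> bool" where
  "infinite_emitter src v \<longleftrightarrow> infinite {e. src e = v}"

definition sink :: "('e \<Rightarrow> 'v) \<Rightarrow> 'v \<Rightarrow> bool" where
  "sink src v \<longleftrightarrow> {e. src e = v} = {}"

definition regular :: "('e \<Rightarrow> 'v) \<Rightarrow> 'v \<Rightarrow> bool" where
  "regular src v \<longleftrightarrow> \<not> infinite_emitter src v \<and> \<not> sink src v"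

definition hereditary :: "('e \<Rightarrow> 'v) \<Rightarrow> ('e \<Rightarrow> 'v) \<Rightarrow> 'v set \<Rightarrow> bool" where
  "hereditary src rng H \<longleftrightarrow> (\<forall>u \<in> H. \<forall>v. reaches src rng u v \<longrightarrow> v \<in> H)"

definition saturated :: "('e \<Rightarrow> 'v) \<Rightarrow> ('e \<Rightarrow> 'v) \<Rightarrow> 'v set \<Rightarrow> bool" where
  "saturated src rng H \<longleftrightarrow>
     (\<forall>v. regular src v \<and> rng ` {e. src e = v} \<subseteq> H \<longrightarrow> v \<in> H)"

definition Rset :: "('e \<Rightarrow> 'v) \<Rightarrow> ('e \<Rightarrow> 'v) \<Rightarrow> 'v set \<Rightarrow> 'v set" where
  "Rset src rng V = {u. \<exists>v \<in> V. reaches src rng u v}"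

definition breaking_verts :: "('e \<Rightarrow> 'v) \<Rightarrow> ('e \<Rightarrow> 'v) \<Rightarrow> 'v set \<Rightarrow> 'v set" where
  "breaking_verts src rng H = {v. v \<notin> H \<and> infinite_emitter src v \<and>
     {e. src e = v \<and> rng e \<notin> H} \<noteq> {} \<and> finite {e. src e = v \<and> rng e \<notin> H}}"

definition admissible_pair :: "('e \<Rightarrow> 'v) \<Rightarrow> ('e \<Rightarrow> 'v) \<Rightarrow> 'v set \<Rightarrow> 'v set \<Rightarrow> bool" where
  "admissible_pair src rng H S \<longleftrightarrow> hereditary src rng H \<and> saturated src rng H
     \<and> S \<subseteq> breaking_verts src rng H"

end

theory Submission
  imports Defs
begin

text \<open>If v lies on a cycle c and reaches some h, then h reaches back into c: either c has
  no exits, so every path from c stays in c, or c is extreme. Hence h reaches v. For a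
  hereditary H and h \<in> H this forces v \<in> H, so no vertex of R(H) - H lies on a cycle, and
  therefore none is an infinite emitter; it is not a sink either, as it emits the first edge
  of a path into H. An infinite emitter v \<notin> H with only finitely many edges leaving H has an
  edge into H, so it lies in R(H) - H; thus B_H is empty.\<close>

lemma epath_append:
  assumes "is_epath s r p" "is_epath s r q" "r (last p) = s (hd q)"
  shows "is_epath s r (p @ q)"
  unfolding is_epath_def
proof (intro conjI allI impI)
  show "p @ q \<noteq> []" using assms(1) by (simp add: is_epath_def)
next
  fix i assume i: "Suc i < length (p @ q)"
  have p: "p \<noteq> []" "\<forall>i. Suc i < length p \<longrightarrow> r (p ! i) = s (p ! Suc i)"
    using assms(1) by (auto simp: is_epath_def)
  have q: "\<forall>i. Suc i < length q \<longrightarrow> r (q ! i) = s (q ! Suc i)"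
    using assms(2) by (auto simp: is_epath_def)
  consider "Suc i < length p" | "Suc i = length p" | "Suc i > length p" by linarith
  then show "r ((p @ q) ! i) = s ((p @ q) ! Suc i)"
  proof cases
    case 1
    then show ?thesis using p by (simp add: nth_append)
  next
    case 2
    then have "i = length p - 1" by simp
    then show ?thesis using 2 p assms(2,3)
      by (simp add: nth_append last_conv_nth hd_conv_nth is_epath_def)
  next
    case 3
    then have "Suc (i - length p) < length q" using i by auto
    then show ?thesis using 3 q by (simp add: nth_append Suc_diff_le)
  qed
qed

lemma epath_take:
  assumes "is_epath s r p" "0 < k"
  shows "is_epath s r (take k p)"
  using assms by (auto simp: is_epath_def)

lemma epath_drop:
  assumes "is_epath s r p" "k < length p"
  shows "is_epath s r (drop k p)"
  using assms by (auto simp: is_epath_def)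

lemma reaches_refl [simp]: "reaches s r u u"
  by (simp add: reaches_def)

lemma reaches_edge: "reaches s r (s e) (r e)"
proof -
  have "is_epath s r [e]" by (simp add: is_epath_def)
  then show ?thesis unfolding reaches_def by force
qed

lemma reaches_trans:
  assumes "reaches s r u v" "reaches s r v w"
  shows "reaches s r u w"
proof (cases "u = v \<or> v = w")
  case False
  then obtain p q where "is_epath s r p" "s (hd p) = u" "r (last p) = v"
    and "is_epath s r q" "s (hd q) = v" "r (last q) = w"
    using assms by (auto simp: reaches_def)
  moreover from calculation have "p \<noteq> []" "q \<noteq> []" by (auto simp: is_epath_def)
  ultimately have "is_epath s r (p @ q)" "s (hd (p @ q)) = u" "r (last (p @ q)) = w"
    using epath_append[of s r p q] by auto
  then show ?thesis unfolding reaches_def by blast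
qed (use assms in auto)

lemma reaches_closed_set:
  assumes closed: "\<And>e. s e \<in> V \<Longrightarrow> r e \<in> V" and "u \<in> V" "reaches s r u w"
  shows "w \<in> V"
proof (cases "u = w")
  case False
  then obtain p where p: "is_epath s r p" "s (hd p) = u" "r (last p) = w"
    using assms(3) by (auto simp: reaches_def)
  then have ne: "p \<noteq> []" and step: "\<And>i. Suc i < length p \<Longrightarrow> r (p ! i) = s (p ! Suc i)"
    by (auto simp: is_epath_def)
  have "s (p ! i) \<in> V" if "i < length p" for i
    using that
  proof (induction i)
    case 0
    then show ?case using p(2) ne \<open>u \<in> V\<close> by (simp add: hd_conv_nth)
  next
    case (Suc i)
    then show ?case using closed step by (metis Suc_lessD)
  qed
  then have "s (last p) \<in> V" using ne by (simp add: last_conv_nth)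
  then show ?thesis using p(3) closed by blast
qed (use assms in simp)

lemma Rset_diff_not_sink:
  assumes "v \<in> Rset s r H - H"
  shows "\<not> sink s v"
proof -
  obtain h where "h \<in> H" "reaches s r v h" using assms by (auto simp: Rset_def)
  moreover have "v \<noteq> h" using assms calculation by auto
  ultimately obtain p where "is_epath s r p" "s (hd p) = v"
    by (auto simp: reaches_def)
  then show ?thesis by (auto simp: sink_def is_epath_def)
qed

lemma cycle_path_verts:
  assumes "is_cycle s r c"
  shows "path_verts s r c = s ` set c"
proof -
  have ne: "c \<noteq> []" and step: "\<And>i. Suc i < length c \<Longrightarrow> r (c ! i) = s (c ! Suc i)"
    and closed: "r (last c) = s (hd c)"
    using assms by (auto simp: is_cycle_def is_epath_def)
  have "r (c ! k) \<in> s ` set c" if "k < length c" for k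
  proof (cases "Suc k < length c")
    case True
    then show ?thesis using step by auto
  next
    case False
    then have "k = length c - 1" using that by simp
    then have "r (c ! k) = r (last c)" using ne by (simp add: last_conv_nth)
    then show ?thesis using closed ne by simp
  qed
  then show ?thesis by (auto simp: path_verts_def in_set_conv_nth)
qed

lemma cycle_reaches_from_hd:
  assumes c: "is_cycle s r c" and k: "k < length c"
  shows "reaches s r (s (hd c)) (s (c ! k))"
proof (cases "k = 0")
  case False
  have ep: "is_epath s r c" "c \<noteq> []"
    and step: "\<And>i. Suc i < length c \<Longrightarrow> r (c ! i) = s (c ! Suc i)"
    using c by (auto simp: is_cycle_def is_epath_def)
  have "is_epath s r (take k c)" using epath_take[OF ep(1)] False by simp
  moreover have "s (hd (take k c)) = s (hd c)" using False by simp
  moreover have "r (last (take k c)) = s (c ! k)"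
  proof -
    have "take k c = take (k - 1) c @ [c ! (k - 1)]"
      using take_Suc_conv_app_nth[of "k - 1" c] False k by simp
    then have "last (take k c) = c ! (k - 1)" by simp
    then show ?thesis using False k step[of "k - 1"] by simp
  qed
  ultimately show ?thesis unfolding reaches_def by blast
qed (use c in \<open>simp add: is_cycle_def is_epath_def hd_conv_nth\<close>)

lemma cycle_reaches_hd:
  assumes c: "is_cycle s r c" and k: "k < length c"
  shows "reaches s r (s (c ! k)) (s (hd c))"
proof -
  have "is_epath s r c" "r (last c) = s (hd c)"
    using c by (auto simp: is_cycle_def)
  moreover have "is_epath s r (drop k c)" using epath_drop[OF calculation(1) k] .
  moreover have "s (hd (drop k c)) = s (c ! k)" using k by (simp add: hd_drop_conv_nth)
  ultimately show ?thesis using k unfolding reaches_def by auto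
qed

lemma cycle_reaches:
  assumes "is_cycle s r c" "x \<in> path_verts s r c" "y \<in> path_verts s r c"
  shows "reaches s r x y"
proof -
  obtain i j where "i < length c" "x = s (c ! i)" "j < length c" "y = s (c ! j)"
    using assms by (auto simp: cycle_path_verts in_set_conv_nth)
  then show ?thesis
    using reaches_trans[OF cycle_reaches_hd[OF assms(1)] cycle_reaches_from_hd[OF assms(1)]]
    by blast
qed

lemma reaches_back_to_cycle:
  assumes c: "is_cycle s r c" and kind: "\<not> has_exits s r c \<or> extreme_cycle s r c"
    and v: "v \<in> path_verts s r c" and vh: "reaches s r v h"
  shows "reaches s r h v"
proof (cases "v = h")
  case False
  then obtain p where p: "is_epath s r p" "s (hd p) = v" "r (last p) = h"
    using vh by (auto simp: reaches_def)
  obtain w where w: "w \<in> path_verts s r c" "reaches s r h w"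
  proof (cases "has_exits s r c")
    case False
    then have "\<And>e. s e \<in> path_verts s r c \<Longrightarrow> r e \<in> path_verts s r c"
      by (auto simp: has_exits_def is_exit_def path_verts_def)
    then have "h \<in> path_verts s r c" using v vh by (rule reaches_closed_set)
    then show ?thesis using that reaches_refl[of s r h] by blast
  next
    case True
    then have "extreme_cycle s r c" using kind by blast
    then have "\<exists>w \<in> path_verts s r c. reaches s r h w"
      using p v unfolding extreme_cycle_def by blast
    then show ?thesis using that by blast
  qed
  show ?thesis using reaches_trans[OF w(2) cycle_reaches[OF c w(1) v]] .
qed simp

lemma Rset_diff_not_on_cycle:
  assumes cyc: "\<And>c. is_cycle s r c \<Longrightarrow> \<not> has_exits s r c \<or> extreme_cycle s r c"
    and her: "hereditary s r H" and v: "v \<in> Rset s r H - H"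
  shows "\<not> on_cycle s r v"
proof
  assume "on_cycle s r v"
  then obtain c where c: "is_cycle s r c" "v \<in> path_verts s r c"
    unfolding on_cycle_def by blast
  obtain h where h: "h \<in> H" "reaches s r v h" using v unfolding Rset_def by blast
  have "reaches s r h v" using reaches_back_to_cycle[OF c(1) cyc[OF c(1)] c(2) h(2)] .
  then have "v \<in> H" using her h(1) unfolding hereditary_def by blast
  then show False using v by blast
qed

lemma breaking_verts_subset_Rset_diff:
  "breaking_verts s r H \<subseteq> {v \<in> Rset s r H - H. infinite_emitter s v}"
proof
  fix v assume v: "v \<in> breaking_verts s r H"
  then have "infinite {e. s e = v}" "finite {e. s e = v \<and> r e \<notin> H}"
    by (auto simp: breaking_verts_def infinite_emitter_def)
  moreover have "{e. s e = v} \<subseteq> {e. s e = v \<and> r e \<notin> H} \<union> {e. s e = v \<and> r e \<in> H}"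
    by auto
  ultimately have "{e. s e = v \<and> r e \<in> H} \<noteq> {}"
    by (metis finite.emptyI finite_Un finite_subset)
  then obtain e where "s e = v" "r e \<in> H" by auto
  then have "v \<in> Rset s r H" using reaches_edge[of s r e] unfolding Rset_def by blast
  then show "v \<in> {v \<in> Rset s r H - H. infinite_emitter s v}"
    using v by (auto simp: breaking_verts_def)
qed

lemma Rset_diff_regular:
  assumes cyc: "\<And>c. is_cycle s r c \<Longrightarrow> \<not> has_exits s r c \<or> extreme_cycle s r c"
    and inf: "\<And>v. infinite_emitter s v \<Longrightarrow> on_cycle s r v"
    and her: "hereditary s r H" and v: "v \<in> Rset s r H - H"
  shows "regular s v"
  using Rset_diff_not_on_cycle[OF cyc her v] inf Rset_diff_not_sink[OF v]
  unfolding regular_def by blast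

lemma breaking_verts_eq_empty:
  assumes "\<And>v. v \<in> Rset s r H - H \<Longrightarrow> \<not> infinite_emitter s v"
  shows "breaking_verts s r H = {}"
  using breaking_verts_subset_Rset_diff[of s r H] assms by auto

theorem lemma3p13:
  fixes src rng :: "'e \<Rightarrow> 'v"
  assumes cyc: "\<And>c. is_cycle src rng c \<Longrightarrow>
                  \<not> has_exits src rng c \<or> extreme_cycle src rng c"
      and inf: "\<And>v. infinite_emitter src v \<Longrightarrow> on_cycle src rng v"
  shows "(\<forall>H. hereditary src rng H \<and> saturated src rng H \<longrightarrow>
            (\<forall>v \<in> Rset src rng H - H. \<not> on_cycle src rng v \<and> regular src v))
       \<and> (\<forall>H S. admissible_pair src rng H S \<longrightarrow>
            breaking_verts src rng H = {} \<and> S = {})"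
proof (intro conjI allI impI ballI)
  fix H v
  assume "hereditary src rng H \<and> saturated src rng H" and v: "v \<in> Rset src rng H - H"
  then have her: "hereditary src rng H" by blast
  show "\<not> on_cycle src rng v" using Rset_diff_not_on_cycle[OF cyc her v] .
  show "regular src v" using Rset_diff_regular[OF cyc inf her v] .
next
  fix H S
  assume "admissible_pair src rng H S"
  then have her: "hereditary src rng H" and S: "S \<subseteq> breaking_verts src rng H"
    unfolding admissible_pair_def by blast+
  have "\<not> infinite_emitter src v" if "v \<in> Rset src rng H - H" for v
    using Rset_diff_regular[OF cyc inf her that] unfolding regular_def by blast
  then have "breaking_verts src rng H = {}" by (rule breaking_verts_eq_empty)
  then show "breaking_verts src rng H = {}" "S = {}" using S by blast+
qed

end
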